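(* Let $D$ be a digraph, let $S\subseteq V(D)$ be a nonempty set of vertices of in-degree $0$ in $D$, and let $T\subseteq V(D)$ with $T\cap S=\emptyset$. If $d^+(v)\ge \Delta^-(D)$ for every $v\in V(D)\setminus T$, then there exist $|S|$ vertex-disjoint directed paths in $D$, each starting in $S$ and ending in $T$.
   Context: $d^+(v)$ is the out-degree of $v$ and $\Delta^-(D)$ is the maximum in-degree of $D$. *)

theory Defs
  imports Main
begin

definition digraph :: "'a set \<Rightarrow> ('a \<times> 'a) set \<Rightarrow> bool" where
  "digraph V E \<longleftrightarrow> finite V \<and> E \<subseteq> V \<times> V \<and> (\<forall>v. (v, v) \<notin> E)"

definition out_degree :: "('a \<times> 'a) set \<Rightarrow> 'a \<Rightarrow> nat" where
  "out_degree E v = card {w. (v, w) \<in> E}"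

definition in_degree :: "('a \<times> 'a) set \<Rightarrow> 'a \<Rightarrow> nat" where
  "in_degree E v = card {u. (u, v) \<in> E}"

definition max_in_degree :: "'a set \<Rightarrow> ('a \<times> 'a) set \<Rightarrow> nat" where
  "max_in_degree V E = (if V = {} then 0 else Max (in_degree E ` V))"

definition dpath :: "'a set \<Rightarrow> ('a \<times> 'a) set \<Rightarrow> 'a list \<Rightarrow> bool" where
  "dpath V E p \<longleftrightarrow> p \<noteq> [] \<and> distinct p \<and> set p \<subseteq> V \<and>
     (\<forall>i. Suc i < length p \<longrightarrow> (p ! i, p ! Suc i) \<in> E)"

end

theory Submission
  imports Defs
begin

text \<open>By Menger's theorem it suffices that every vertex set \<open>X\<close> meeting all \<open>S\<close>--\<open>T\<close> walks has
  \<open>|X| \<ge> |S|\<close>. Let \<open>R\<close> be the set of vertices reachable from \<open>S\<close> by walks avoiding \<open>X\<close>. It misses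
  \<open>T\<close>, so every vertex of \<open>R\<close> has out-degree at least \<open>\<Delta>\<^sup>-(D)\<close>; every arc leaving \<open>R\<close> ends in
  \<open>(R \<union> X) - S\<close> (no arc enters \<open>S\<close>), where in-degrees are at most \<open>\<Delta>\<^sup>-(D)\<close>. Counting these arcs
  gives \<open>|R| \<le> |(R \<union> X) - S|\<close>, and since \<open>R \<inter> S = S - X\<close> this says \<open>|S - X| \<le> |X - S|\<close>.
  Menger's theorem itself is proved by induction on the number of arcs, as in Diestel's first
  proof.\<close>

section \<open>Walks, separators and linkages\<close>

definition walk :: "('a \<times> 'a) set \<Rightarrow> 'a list \<Rightarrow> bool" where
  "walk E p \<longleftrightarrow> p \<noteq> [] \<and> successively (\<lambda>a b. (a, b) \<in> E) p"

lemma walk_single [simp]: "walk E [x]"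
  by (simp add: walk_def)

lemma walk_Cons: "walk E (x # xs) \<longleftrightarrow> xs = [] \<or> (x, hd xs) \<in> E \<and> walk E xs"
  by (auto simp: walk_def successively_Cons)

lemma walk_empty: "walk {} p \<Longrightarrow> \<exists>a. p = [a]"
  by (metis empty_iff list.exhaust walk_Cons walk_def)

lemma walk_mono: "walk E p \<Longrightarrow> E \<subseteq> F \<Longrightarrow> walk F p"
  unfolding walk_def by (auto elim: successively_mono)

lemma walk_append: "walk E p \<Longrightarrow> walk E q \<Longrightarrow> (last p, hd q) \<in> E \<Longrightarrow> walk E (p @ q)"
  unfolding walk_def by (auto simp: successively_append_iff)

lemma walk_join: "walk E p \<Longrightarrow> walk E q \<Longrightarrow> last p = hd q \<Longrightarrow> walk E (p @ tl q)"
  by (cases q) (auto simp: walk_def successively_append_iff successively_Cons)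

lemma walk_split: "walk E (xs @ v # ys) \<Longrightarrow> walk E (xs @ [v]) \<and> walk E (v # ys)"
  unfolding walk_def by (auto simp: successively_append_iff successively_Cons)

lemma walk_subset_vertices: "walk E p \<Longrightarrow> E \<subseteq> V \<times> V \<Longrightarrow> hd p \<in> V \<Longrightarrow> set p \<subseteq> V"
  by (induction p) (auto simp: walk_Cons)

lemma dpath_iff_walk: "dpath V E p \<longleftrightarrow> walk E p \<and> distinct p \<and> set p \<subseteq> V"
  by (auto simp: dpath_def walk_def successively_conv_nth)

lemma walk_without_arc_tail:
  "walk (insert (x, y) F) p \<Longrightarrow> x \<notin> set (butlast p) \<Longrightarrow> walk F p"
  by (induction p) (auto simp: walk_def[of _ "[]"] walk_Cons split: if_splits)

lemma walk_without_arc_head: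
  "walk (insert (x, y) F) p \<Longrightarrow> y \<notin> set (tl p) \<Longrightarrow> walk F p"
  by (induction p) (auto simp: walk_def[of _ "[]"] walk_Cons dest: list.set_sel(2))

lemma distinct_walk_exists:
  assumes "walk E p"
  shows "\<exists>q. walk E q \<and> distinct q \<and> hd q = hd p \<and> last q = last p \<and> set q \<subseteq> set p"
  using assms
proof (induction "length p" arbitrary: p rule: less_induct)
  case less
  show ?case
  proof (cases "distinct p")
    case False
    then obtain xs v ys zs where p: "p = xs @ [v] @ ys @ [v] @ zs"
      using not_distinct_decomp by blast
    let ?p' = "xs @ [v] @ zs"
    have "walk E (xs @ [v])" "walk E (v # zs)"
      using walk_split[of E xs v "ys @ [v] @ zs"] walk_split[of E "xs @ [v] @ ys" v zs] less.prems p
      by simp_all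
    then have "walk E ?p'"
      using walk_join by fastforce
    moreover have "length ?p' < length p" "set ?p' \<subseteq> set p" using p by auto
    moreover have "hd ?p' = hd p" "last ?p' = last p" using p by (cases xs; cases zs; simp)+
    ultimately show ?thesis using less.hyps by (metis subset_trans)
  qed (use less.prems in blast)
qed

definition separates :: "('a \<times> 'a) set \<Rightarrow> 'a set \<Rightarrow> 'a set \<Rightarrow> 'a set \<Rightarrow> bool" where
  "separates E A B X \<longleftrightarrow> (\<forall>p. walk E p \<longrightarrow> hd p \<in> A \<longrightarrow> last p \<in> B \<longrightarrow> set p \<inter> X \<noteq> {})"

definition linkage :: "('a \<times> 'a) set \<Rightarrow> 'a set \<Rightarrow> 'a set \<Rightarrow> nat \<Rightarrow> 'a list set \<Rightarrow> bool" where
  "linkage E A B k P \<longleftrightarrow> finite P \<and> card P = k \<and> (\<forall>p\<in>P. walk E p \<and> hd p \<in> A \<and> last p \<in> B)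
     \<and> (\<forall>p\<in>P. \<forall>q\<in>P. p \<noteq> q \<longrightarrow> set p \<inter> set q = {})"

text \<open>Together with \<open>hd p \<in> A\<close> and \<open>last p \<in> B\<close>, this makes \<open>p\<close> an \<open>A\<close>--\<open>B\<close> path
  in Diestel's sense.\<close>
definition AB_path :: "'a set \<Rightarrow> 'a set \<Rightarrow> 'a list \<Rightarrow> bool" where
  "AB_path A B p \<longleftrightarrow> distinct p \<and> set (tl p) \<inter> A = {} \<and> set (butlast p) \<inter> B = {}"

lemma AB_path_exists:
  assumes "walk E p" "hd p \<in> A" "last p \<in> B"
  shows "\<exists>q. walk E q \<and> hd q \<in> A \<and> last q \<in> B \<and> AB_path A B q \<and> set q \<subseteq> set p"
proof -
  obtain p1 where p1: "walk E p1" "distinct p1" "hd p1 = hd p" "last p1 = last p" "set p1 \<subseteq> set p"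
    using distinct_walk_exists[OF assms(1)] by blast
  then have "p1 \<noteq> []" by (auto simp: walk_def)
  then have "\<exists>v\<in>set p1. v \<in> B" using assms(3) p1(4) last_in_set by metis
  then obtain ys b zs where p1_split: "p1 = ys @ b # zs" "b \<in> B" "\<forall>v\<in>set ys. v \<notin> B"
    using split_list_first_prop[of p1 "\<lambda>v. v \<in> B"] by blast
  define q1 where "q1 = ys @ [b]"
  have q1: "walk E q1" "distinct q1" "hd q1 = hd p" "set (butlast q1) \<inter> B = {}"
  proof -
    show "walk E q1" using walk_split[of E ys b zs] p1(1) p1_split(1) by (simp add: q1_def)
    show "distinct q1" using p1(2) p1_split(1) by (simp add: q1_def)
    show "hd q1 = hd p" using p1(3) p1_split(1) by (cases ys) (simp_all add: q1_def)
    show "set (butlast q1) \<inter> B = {}" using p1_split(3) by (auto simp: q1_def)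
  qed
  have "\<exists>v\<in>set q1. v \<in> A" using q1(3) assms(2) hd_in_set[of q1] by (auto simp: q1_def)
  then obtain us a ws where q1_split: "q1 = us @ a # ws" "a \<in> A" "\<forall>v\<in>set ws. v \<notin> A"
    using split_list_last_prop[of q1 "\<lambda>v. v \<in> A"] by blast
  define q where "q = a # ws"
  have "walk E q" using walk_split[of E us a ws] q1(1) q1_split by (simp add: q_def)
  moreover have "last q = b" using arg_cong[OF q1_split(1), of last] by (simp add: q_def q1_def)
  moreover have "set (butlast q) \<subseteq> set (butlast q1)"
    using q1_split(1) by (simp add: q_def butlast_append)
  moreover have "distinct q" using q1(2) q1_split by (simp add: q_def)
  moreover have "set q \<subseteq> set q1" by (auto simp: q1_split(1) q_def)
  moreover have "set q1 \<subseteq> set p" using p1(5) p1_split(1) by (auto simp: q1_def)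
  ultimately show ?thesis
    using q1(4) q1_split(2,3) p1_split(2) by (fastforce simp: q_def AB_path_def)
qed

lemma linkage_disjoint:
  "linkage E A B k P \<Longrightarrow> p \<in> P \<Longrightarrow> q \<in> P \<Longrightarrow> p \<noteq> q \<Longrightarrow> set p \<inter> set q = {}"
  by (simp add: linkage_def)

lemma linkage_walk:
  "linkage E A B k P \<Longrightarrow> p \<in> P \<Longrightarrow> walk E p \<and> p \<noteq> [] \<and> hd p \<in> A \<and> last p \<in> B"
  by (simp add: linkage_def walk_def)

lemma linkage_AB_paths:
  assumes "linkage E A B k P"
  shows "\<exists>P'. linkage E A B k P' \<and> (\<forall>p\<in>P'. AB_path A B p)"
proof -
  obtain f where f: "\<And>p. p \<in> P \<Longrightarrow>
      walk E (f p) \<and> hd (f p) \<in> A \<and> last (f p) \<in> B \<and> AB_path A B (f p) \<and> set (f p) \<subseteq> set p"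
    using AB_path_exists linkage_walk[OF assms] by metis
  have disj: "set (f p) \<inter> set (f q) = {}" if "p \<in> P" "q \<in> P" "p \<noteq> q" for p q
    using linkage_disjoint[OF assms that] f[OF that(1)] f[OF that(2)] by blast
  have "inj_on f P"
  proof (rule inj_onI)
    fix p q assume "p \<in> P" "q \<in> P" "f p = f q"
    then show "p = q" using disj[of p q] f[of p] by (auto simp: walk_def)
  qed
  moreover have "\<forall>p\<in>f ` P. \<forall>q\<in>f ` P. p \<noteq> q \<longrightarrow> set p \<inter> set q = {}"
    using disj by blast
  ultimately have "linkage E A B k (f ` P)"
    using assms f unfolding linkage_def by (auto simp: card_image)
  then show ?thesis using f by blast
qed

lemma linkage_mono: "linkage E A B k P \<Longrightarrow> E \<subseteq> F \<Longrightarrow> linkage F A B k P"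
  unfolding linkage_def using walk_mono by blast

lemma linkage_inj_on:
  assumes "linkage E A B k P" "\<And>p. p \<noteq> [] \<Longrightarrow> endpoint p \<in> set p"
  shows "inj_on endpoint P"
proof (rule inj_onI)
  fix p q assume pq: "p \<in> P" "q \<in> P" "endpoint p = endpoint q"
  show "p = q"
  proof (rule ccontr)
    assume "p \<noteq> q"
    then have "set p \<inter> set q = {}" using linkage_disjoint[OF assms(1) pq(1,2)] by blast
    moreover have "endpoint p \<in> set p" "endpoint q \<in> set q"
      using assms(2) linkage_walk[OF assms(1)] pq(1,2) by blast+
    ultimately show False using pq(3) by auto
  qed
qed

lemma linkage_hd_image:
  assumes "linkage E A B (card A) P" "finite A"
  shows "hd ` P = A"
proof (rule card_subset_eq[OF assms(2)])
  show "hd ` P \<subseteq> A" using linkage_walk[OF assms(1)] by blast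
  show "card (hd ` P) = card A"
    using assms(1) card_image[OF linkage_inj_on[OF assms(1) hd_in_set]] by (simp add: linkage_def)
qed

section \<open>Menger's theorem\<close>

lemma separates_insert_tail:
  assumes "separates F A B Y"
  shows "separates (insert (x, y) F) A B (insert x Y)"
  unfolding separates_def
proof (intro allI impI)
  fix p assume p: "walk (insert (x, y) F) p" "hd p \<in> A" "last p \<in> B"
  show "set p \<inter> insert x Y \<noteq> {}"
  proof (cases "x \<in> set p")
    case False
    then have "walk F p" using walk_without_arc_tail p(1) in_set_butlastD by metis
    then show ?thesis using assms p(2,3) unfolding separates_def by blast
  qed auto
qed

lemma separates_insert_head:
  assumes "separates F A B Y"
  shows "separates (insert (x, y) F) A B (insert y Y)"
  unfolding separates_def
proof (intro allI impI)
  fix p assume p: "walk (insert (x, y) F) p" "hd p \<in> A" "last p \<in> B"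
  show "set p \<inter> insert y Y \<noteq> {}"
  proof (cases "y \<in> set p")
    case False
    then have "y \<notin> set (tl p)" by (cases p) auto
    then have "walk F p" using walk_without_arc_head p(1) by metis
    then show ?thesis using assms p(2,3) unfolding separates_def by blast
  qed auto
qed

lemma separates_through_tail:
  assumes "separates (insert (x, y) F) A B X" "x \<in> X" "separates F A X Z"
  shows "separates (insert (x, y) F) A B Z"
  unfolding separates_def
proof (intro allI impI)
  fix p assume p: "walk (insert (x, y) F) p" "hd p \<in> A" "last p \<in> B"
  then have "\<exists>v\<in>set p. v \<in> X" using assms(1) by (auto simp: separates_def)
  then obtain ys v zs where split: "p = ys @ v # zs" "v \<in> X" "\<forall>u\<in>set ys. u \<notin> X"
    using split_list_first_prop[of p "\<lambda>v. v \<in> X"] by blast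
  have "walk F (ys @ [v])"
    using walk_without_arc_tail walk_split[of _ ys v zs] p(1) split(1,3) assms(2) by fastforce
  moreover have "hd (ys @ [v]) = hd p" by (cases ys) (simp_all add: split(1))
  ultimately have "set (ys @ [v]) \<inter> Z \<noteq> {}"
    using assms(3) p(2) split(2) unfolding separates_def by (metis last_snoc)
  then show "set p \<inter> Z \<noteq> {}" using split(1) by auto
qed

lemma separates_through_head:
  assumes "separates (insert (x, y) F) A B X" "y \<in> X" "separates F X B Z"
  shows "separates (insert (x, y) F) A B Z"
  unfolding separates_def
proof (intro allI impI)
  fix p assume p: "walk (insert (x, y) F) p" "hd p \<in> A" "last p \<in> B"
  then have "\<exists>v\<in>set p. v \<in> X" using assms(1) by (auto simp: separates_def)
  then obtain ys v zs where split: "p = ys @ v # zs" "v \<in> X" "\<forall>u\<in>set zs. u \<notin> X"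
    using split_list_last_prop[of p "\<lambda>v. v \<in> X"] by blast
  have "walk F (v # zs)"
    using walk_without_arc_head walk_split[of _ ys v zs] p(1) split(1,3) assms(2) by fastforce
  moreover have "last (v # zs) = last p" by (simp add: split(1))
  ultimately have "set (v # zs) \<inter> Z \<noteq> {}"
    using assms(3) p(3) split(2) unfolding separates_def by (metis list.sel(1))
  then show "set p \<inter> Z \<noteq> {}" using split(1) by auto
qed

lemma walks_meet_in_separator:
  assumes "separates E A B Y"
    and "walk E p" "hd p \<in> A" "set (butlast p) \<inter> Y = {}"
    and "walk E q" "last q \<in> B" "set (tl q) \<inter> Y = {}"
    and "v \<in> set p" "v \<in> set q"
  shows "v \<in> Y \<and> v = last p \<and> v = hd q"
proof -
  obtain p1 p2 where p: "p = p1 @ v # p2" using split_list assms(8) by metis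
  obtain q1 q2 where q: "q = q1 @ v # q2" using split_list assms(9) by metis
  have "walk E (p1 @ [v])" "walk E (v # q2)"
    using walk_split[of E p1 v p2] walk_split[of E q1 v q2] assms(2,5) p q by simp_all
  then have "walk E (p1 @ v # q2)" using walk_join by fastforce
  moreover have "hd (p1 @ v # q2) = hd p" by (cases p1) (simp_all add: p)
  moreover have "last (p1 @ v # q2) = last q" by (simp add: q)
  ultimately have "set (p1 @ v # q2) \<inter> Y \<noteq> {}"
    using assms(1,3,6) unfolding separates_def by metis
  moreover have "set p1 \<subseteq> set (butlast p)" by (simp add: p butlast_append)
  moreover have "set q2 \<subseteq> set (tl q)" by (cases q1) (auto simp: q)
  ultimately have "v \<in> Y" using assms(4,7) by auto
  then have "v \<notin> set (butlast p)" "v \<notin> set (tl q)" using assms(4,7) by auto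
  then have "p2 = []" "q1 = []"
    by (auto simp: p q butlast_append tl_append split: list.splits if_splits)
  then show ?thesis using \<open>v \<in> Y\<close> p q by simp
qed

definition join_walks :: "'a list \<Rightarrow> 'a list \<Rightarrow> 'a list" where
  "join_walks p q = (if last p = hd q then p @ tl q else p @ q)"

lemma walk_join_walks:
  "walk E p \<Longrightarrow> walk E q \<Longrightarrow> last p = hd q \<or> (last p, hd q) \<in> E \<Longrightarrow> walk E (join_walks p q)"
  by (auto simp: join_walks_def walk_join walk_append)

lemma hd_join_walks: "p \<noteq> [] \<Longrightarrow> hd (join_walks p q) = hd p"
  by (simp add: join_walks_def)

lemma last_join_walks: "p \<noteq> [] \<Longrightarrow> q \<noteq> [] \<Longrightarrow> last (join_walks p q) = last q"
  by (cases q) (auto simp: join_walks_def)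

lemma set_join_walks: "set (join_walks p q) \<subseteq> set p \<union> set q"
  by (cases q) (auto simp: join_walks_def)

lemma linkage_join_walks:
  assumes P: "linkage E A C k P" and Q: "linkage E D B l Q"
    and match: "\<And>p. p \<in> P \<Longrightarrow> match p \<in> Q"
      "\<And>p. p \<in> P \<Longrightarrow> last p = hd (match p) \<or> (last p, hd (match p)) \<in> E"
    and cross: "\<And>p p'. p \<in> P \<Longrightarrow> p' \<in> P \<Longrightarrow> p \<noteq> p' \<Longrightarrow> set p \<inter> set (match p') = {}"
    and match_disj: "\<And>p p'. p \<in> P \<Longrightarrow> p' \<in> P \<Longrightarrow> p \<noteq> p' \<Longrightarrow> set (match p) \<inter> set (match p') = {}"
  shows "linkage E A B k ((\<lambda>p. join_walks p (match p)) ` P)"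
proof -
  have walk_R: "walk E (join_walks p (match p))" "join_walks p (match p) \<noteq> []"
    "hd (join_walks p (match p)) \<in> A" "last (join_walks p (match p)) \<in> B" if "p \<in> P" for p
  proof -
    have p: "walk E p" "p \<noteq> []" "hd p \<in> A" using linkage_walk[OF P that] by blast+
    have q: "walk E (match p)" "match p \<noteq> []" "last (match p) \<in> B"
      using linkage_walk[OF Q match(1)[OF that]] by blast+
    show "walk E (join_walks p (match p))" using walk_join_walks p(1) q(1) match(2)[OF that] .
    show "join_walks p (match p) \<noteq> []" using p(2) by (simp add: join_walks_def)
    show "hd (join_walks p (match p)) \<in> A" "last (join_walks p (match p)) \<in> B"
      using p q by (simp_all add: hd_join_walks last_join_walks)
  qed
  have disj_R: "set (join_walks p (match p)) \<inter> set (join_walks p' (match p')) = {}"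
    if "p \<in> P" "p' \<in> P" "p \<noteq> p'" for p p'
    using set_join_walks[of p "match p"] set_join_walks[of p' "match p'"] linkage_disjoint[OF P that]
      cross[OF that] cross[OF that(2,1)] that(3)[symmetric] match_disj[OF that] by blast
  have "inj_on (\<lambda>p. join_walks p (match p)) P"
  proof (rule inj_onI)
    fix p p' assume pp': "p \<in> P" "p' \<in> P" "join_walks p (match p) = join_walks p' (match p')"
    show "p = p'"
      using disj_R[OF pp'(1,2)] walk_R(2)[OF pp'(1)] pp'(3) by auto
  qed
  then have "card ((\<lambda>p. join_walks p (match p)) ` P) = k" using P by (simp add: linkage_def card_image)
  moreover have "\<forall>r\<in>(\<lambda>p. join_walks p (match p)) ` P. \<forall>r'\<in>(\<lambda>p. join_walks p (match p)) ` P.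
      r \<noteq> r' \<longrightarrow> set r \<inter> set r' = {}"
    using disj_R by fastforce
  ultimately show ?thesis
    using P walk_R(1,3,4) unfolding linkage_def by blast
qed

text \<open>The inductive step of Menger's theorem: \<open>P\<close> ends in \<open>Y\<close> and the tail \<open>x\<close> of the new arc,
  \<open>Q\<close> starts in \<open>Y\<close> and its head \<open>y\<close>; matching ends to starts, with \<open>x\<close> matched to \<open>y\<close>,
  glues them into \<open>A\<close>--\<open>B\<close> walks, which stay disjoint because \<open>P\<close> and \<open>Q\<close> can only meet
  in the separator \<open>Y\<close>.\<close>
lemma linkage_glue:
  assumes Y: "separates F A B Y" "finite Y" "x \<notin> Y" "y \<notin> Y"
    and P: "linkage F A (insert x Y) (card (insert x Y)) P" "\<forall>p\<in>P. AB_path A (insert x Y) p"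
    and Q: "linkage F (insert y Y) B (card (insert y Y)) Q" "\<forall>q\<in>Q. AB_path (insert y Y) B q"
  shows "\<exists>R. linkage (insert (x, y) F) A B (card (insert x Y)) R"
proof -
  define g where "g v = (if v = x then y else v)" for v
  have "hd ` Q = insert y Y" using linkage_hd_image[OF Q(1)] Y(2) by simp
  define match where "match p = inv_into Q hd (g (last p))" for p
  have match: "match p \<in> Q" "hd (match p) = g (last p)" if "p \<in> P" for p
  proof -
    have "g (last p) \<in> insert y Y" using linkage_walk[OF P(1) that] by (auto simp: g_def)
    then show "match p \<in> Q" "hd (match p) = g (last p)"
      using \<open>hd ` Q = insert y Y\<close> inv_into_into f_inv_into_f unfolding match_def by metis+
  qed
  have meet: "v \<in> Y \<and> v = last p \<and> v = hd q" if "p \<in> P" "q \<in> Q" "v \<in> set p" "v \<in> set q" for p q v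
  proof (rule walks_meet_in_separator[OF Y(1) _ _ _ _ _ _ that(3,4)])
    show "set (butlast p) \<inter> Y = {}" using P(2) that(1) by (auto simp: AB_path_def)
    show "set (tl q) \<inter> Y = {}" using Q(2) that(2) by (auto simp: AB_path_def)
  qed (use linkage_walk[OF P(1) that(1)] linkage_walk[OF Q(1) that(2)] in auto)
  have last_inj: "inj_on last P" using linkage_inj_on[OF P(1) last_in_set] .
  have cross: "set p \<inter> set (match p') = {}" if pp': "p \<in> P" "p' \<in> P" "p \<noteq> p'" for p p'
  proof (rule ccontr)
    assume "set p \<inter> set (match p') \<noteq> {}"
    then obtain v where "v \<in> set p" "v \<in> set (match p')" by blast
    then have v: "v \<in> Y" "v = last p" "v = g (last p')"
      using meet[OF pp'(1) match(1)[OF pp'(2)]] match(2)[OF pp'(2)] by simp_all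
    then have "last p' \<noteq> x" using Y(4) by (auto simp: g_def)
    then have "last p = last p'" using v by (simp add: g_def)
    then show False using inj_onD[OF last_inj _ pp'(1,2)] pp'(3) by blast
  qed
  have match_disj: "set (match p) \<inter> set (match p') = {}" if pp': "p \<in> P" "p' \<in> P" "p \<noteq> p'" for p p'
  proof -
    have "last p \<noteq> last p'" using inj_onD[OF last_inj _ pp'(1,2)] pp'(3) by blast
    moreover have "last p \<in> insert x Y" "last p' \<in> insert x Y"
      using linkage_walk[OF P(1) pp'(1)] linkage_walk[OF P(1) pp'(2)] by blast+
    ultimately have "g (last p) \<noteq> g (last p')" using Y(3,4) by (auto simp: g_def)
    then have "match p \<noteq> match p'" using match(2) pp'(1,2) by metis
    then show ?thesis using linkage_disjoint[OF Q(1) match(1)[OF pp'(1)] match(1)[OF pp'(2)]] by blast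
  qed
  have "last p = hd (match p) \<or> (last p, hd (match p)) \<in> insert (x, y) F" if "p \<in> P" for p
    using match(2)[OF that] by (auto simp: g_def)
  with match(1) cross match_disj
  have "linkage (insert (x, y) F) A B (card (insert x Y)) ((\<lambda>p. join_walks p (match p)) ` P)"
    by (intro linkage_join_walks[OF linkage_mono[OF P(1)] linkage_mono[OF Q(1)]]) auto
  then show ?thesis by blast
qed

theorem menger:
  assumes "finite E" "finite A" "finite B"
    and "\<And>X. finite X \<Longrightarrow> separates E A B X \<Longrightarrow> k \<le> card X"
  shows "\<exists>P. linkage E A B k P"
  using assms
proof (induction E arbitrary: A B k rule: finite_induct)
  case empty
  have "separates {} A B (A \<inter> B)"
    unfolding separates_def by (auto dest: walk_empty)
  then have "k \<le> card (A \<inter> B)" using empty.prems by simp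
  then obtain C where C: "C \<subseteq> A \<inter> B" "card C = k"
    using obtain_subset_with_card_n by metis
  have "linkage {} A B k ((\<lambda>a. [a]) ` C)"
    using C finite_subset[OF C(1)] empty.prems(1) unfolding linkage_def
    by (auto simp: card_image inj_on_def)
  then show ?case by blast
next
  case (insert e F)
  obtain x y where e: "e = (x, y)" by fastforce
  show ?case
  proof (cases "\<forall>X. finite X \<longrightarrow> separates F A B X \<longrightarrow> k \<le> card X")
    case True
    then obtain P where "linkage F A B k P" using insert.IH[OF insert.prems(1,2)] by blast
    then show ?thesis using linkage_mono[OF _ subset_insertI] by blast
  next
    case False
    then obtain Y where Y: "finite Y" "separates F A B Y" "card Y < k" by (auto simp: not_le)
    have sep_x: "separates (insert e F) A B (insert x Y)"
      using separates_insert_tail[OF Y(2)] by (simp add: e)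
    have sep_y: "separates (insert e F) A B (insert y Y)"
      using separates_insert_head[OF Y(2)] by (simp add: e)
    have "k \<le> card (insert x Y)" "k \<le> card (insert y Y)"
      using insert.prems(3) sep_x sep_y Y(1) by simp_all
    then have xy: "x \<notin> Y" "y \<notin> Y" and card_xy: "card (insert x Y) = k" "card (insert y Y) = k"
      using Y(1,3) by (auto simp: card_insert_if split: if_splits)
    have "k \<le> card Z" if "finite Z" "separates F A (insert x Y) Z" for Z
      using separates_through_tail[OF sep_x[unfolded e] _ that(2)] insert.prems(3) that(1) e by simp
    then obtain P where "linkage F A (insert x Y) k P"
      using insert.IH[OF insert.prems(1) finite.insertI[OF Y(1)]] by blast
    then obtain P' where P': "linkage F A (insert x Y) k P'" "\<forall>p\<in>P'. AB_path A (insert x Y) p"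
      using linkage_AB_paths by blast
    have "k \<le> card Z" if "finite Z" "separates F (insert y Y) B Z" for Z
      using separates_through_head[OF sep_y[unfolded e] _ that(2)] insert.prems(3) that(1) e by simp
    then obtain Q where "linkage F (insert y Y) B k Q"
      using insert.IH[OF finite.insertI[OF Y(1)] insert.prems(2)] by blast
    then obtain Q' where Q': "linkage F (insert y Y) B k Q'" "\<forall>q\<in>Q'. AB_path (insert y Y) B q"
      using linkage_AB_paths by blast
    show ?thesis
      using linkage_glue[OF Y(2,1) xy] P' Q' unfolding card_xy e by blast
  qed
qed

section \<open>Separators of \<open>S\<close> from \<open>T\<close> are large\<close>

definition reachable_avoiding :: "('a \<times> 'a) set \<Rightarrow> 'a set \<Rightarrow> 'a set \<Rightarrow> 'a set" where
  "reachable_avoiding E A X = {v. \<exists>p. walk E p \<and> hd p \<in> A \<and> last p = v \<and> set p \<inter> X = {}}"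

lemma Diff_subset_reachable_avoiding: "A - X \<subseteq> reachable_avoiding E A X"
  unfolding reachable_avoiding_def by (auto intro!: exI[of _ "[_]"])

lemma reachable_avoiding_disjoint: "reachable_avoiding E A X \<inter> X = {}"
  unfolding reachable_avoiding_def walk_def using last_in_set by fastforce

lemma reachable_avoiding_disjoint_target:
  "separates E A B X \<Longrightarrow> reachable_avoiding E A X \<inter> B = {}"
  unfolding reachable_avoiding_def separates_def by blast

lemma reachable_avoiding_arc:
  assumes "v \<in> reachable_avoiding E A X" "(v, w) \<in> E"
  shows "w \<in> reachable_avoiding E A X \<union> X"
proof (cases "w \<in> X")
  case False
  obtain p where p: "walk E p" "hd p \<in> A" "last p = v" "set p \<inter> X = {}"
    using assms(1) unfolding reachable_avoiding_def by blast
  then have "walk E (p @ [w]) \<and> hd (p @ [w]) \<in> A \<and> last (p @ [w]) = w \<and> set (p @ [w]) \<inter> X = {}"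
    using walk_append[of E p "[w]"] assms(2) False by (auto simp: walk_def)
  then show ?thesis unfolding reachable_avoiding_def by blast
qed simp

lemma finite_successors: "finite E \<Longrightarrow> finite {w. (v, w) \<in> E}"
  by (rule finite_subset[of _ "snd ` E"]) force+

lemma finite_predecessors: "finite E \<Longrightarrow> finite {u. (u, w) \<in> E}"
  by (rule finite_subset[of _ "fst ` E"]) force+

lemma sum_out_degree_le_sum_in_degree:
  assumes "finite E" "finite R" "finite W" "\<And>v w. (v, w) \<in> E \<Longrightarrow> v \<in> R \<Longrightarrow> w \<in> W"
  shows "(\<Sum>v\<in>R. out_degree E v) \<le> (\<Sum>w\<in>W. in_degree E w)"
proof -
  have "(\<Sum>v\<in>R. out_degree E v) = card (Sigma R (\<lambda>v. {w. (v, w) \<in> E}))"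
    using assms(1,2) by (simp add: out_degree_def finite_successors)
  also have "\<dots> \<le> card ((Sigma W (\<lambda>w. {u. (u, w) \<in> E}))\<inverse>)"
    using assms by (intro card_mono) (auto simp: finite_predecessors)
  also have "\<dots> = (\<Sum>w\<in>W. in_degree E w)"
    using assms(1,3) by (simp add: in_degree_def finite_predecessors)
  finally show ?thesis .
qed

lemma finite_arcs: "digraph V E \<Longrightarrow> finite E"
  unfolding digraph_def by (metis finite_SigmaI finite_subset)

lemma in_degree_le_max_in_degree:
  assumes "digraph V E"
  shows "in_degree E w \<le> max_in_degree V E"
proof (cases "w \<in> V")
  case True
  then show ?thesis using assms by (auto simp: digraph_def max_in_degree_def)
next
  case False
  then have "{u. (u, w) \<in> E} = {}" using assms by (auto simp: digraph_def)
  then show ?thesis by (simp add: in_degree_def)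
qed

lemma max_in_degree_pos:
  assumes "digraph V E" "E \<noteq> {}"
  shows "0 < max_in_degree V E"
proof -
  obtain u w where "(u, w) \<in> E" using assms(2) by auto
  then have "0 < in_degree E w"
    unfolding in_degree_def using finite_predecessors[OF finite_arcs[OF assms(1)]] card_gt_0_iff by blast
  then show ?thesis using in_degree_le_max_in_degree[OF assms(1)] order_less_le_trans by blast
qed

lemma separator_card_ge:
  assumes dg: "digraph V E" "E \<noteq> {}"
    and S: "S \<subseteq> V" "\<forall>s\<in>S. in_degree E s = 0"
    and deg: "\<forall>v\<in>V - T. out_degree E v \<ge> max_in_degree V E"
    and X: "finite X" "separates E S T X"
  shows "card S \<le> card X"
proof -
  define \<Delta> where "\<Delta> = max_in_degree V E"
  define R where "R = reachable_avoiding E S X"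
  define W where "W = (R \<union> X) - S"
  have fin_V: "finite V" and E_V: "E \<subseteq> V \<times> V" using dg(1) by (auto simp: digraph_def)
  have R_V: "R \<subseteq> V"
  proof
    fix v assume "v \<in> R"
    then obtain p where p: "walk E p" "hd p \<in> S" "last p = v"
      unfolding R_def reachable_avoiding_def by blast
    then have "set p \<subseteq> V" using walk_subset_vertices[OF p(1) E_V] S(1) by blast
    then show "v \<in> V" using p(1,3) last_in_set by (fastforce simp: walk_def)
  qed
  have fin: "finite R" "finite S" using R_V S(1) fin_V finite_subset by blast+
  then have fin_W: "finite W" using X(1) by (simp add: W_def)
  have "R \<inter> T = {}"
    unfolding R_def by (rule reachable_avoiding_disjoint_target[OF X(2)])
  then have "card R * \<Delta> \<le> (\<Sum>v\<in>R. out_degree E v)"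
    using sum_bounded_below[of R \<Delta> "out_degree E"] R_V deg by (auto simp: \<Delta>_def)
  also have "\<dots> \<le> (\<Sum>w\<in>W. in_degree E w)"
  proof (rule sum_out_degree_le_sum_in_degree[OF finite_arcs[OF dg(1)] fin(1) fin_W])
    fix v w assume vw: "(v, w) \<in> E" "v \<in> R"
    have "w \<notin> S"
    proof
      assume "w \<in> S"
      then have "{u. (u, w) \<in> E} = {}"
        using S(2) finite_predecessors[OF finite_arcs[OF dg(1)]] by (simp add: in_degree_def)
      then show False using vw(1) by blast
    qed
    then show "w \<in> W" using reachable_avoiding_arc[OF vw(2)[unfolded R_def] vw(1)] by (simp add: W_def R_def)
  qed
  also have "\<dots> \<le> card W * \<Delta>"
    using sum_bounded_above[of W "in_degree E" \<Delta>] in_degree_le_max_in_degree[OF dg(1)]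
    by (simp add: \<Delta>_def)
  finally have "card R \<le> card W" using max_in_degree_pos[OF dg] by (simp add: \<Delta>_def)
  moreover have "R \<inter> X = {}" "S - X \<subseteq> R"
    unfolding R_def by (simp_all add: reachable_avoiding_disjoint Diff_subset_reachable_avoiding)
  then have "R = (R - S) \<union> (S - X)" "(R - S) \<inter> (S - X) = {}"
    and "W = (R - S) \<union> (X - S)" "(R - S) \<inter> (X - S) = {}"
    by (auto simp: W_def)
  then have "card R = card (R - S) + card (S - X)" "card W = card (R - S) + card (X - S)"
    using fin X(1) card_Un_disjoint by (metis finite_Diff)+
  moreover have "card S = card (S \<inter> X) + card (S - X)" "card X = card (S \<inter> X) + card (X - S)"
    using card_Int_Diff[OF fin(2), of X] card_Int_Diff[OF X(1), of S] by (simp_all add: Int_commute)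
  ultimately show ?thesis by linarith
qed

theorem lemma22:
  fixes V :: "'a set" and E :: "('a \<times> 'a) set" and S T :: "'a set"
  assumes "digraph V E"
    and "E \<noteq> {}"
    and "S \<subseteq> V" and "S \<noteq> {}" and "\<forall>s\<in>S. in_degree E s = 0"
    and "T \<subseteq> V" and "T \<inter> S = {}"
    and "\<forall>v\<in>V - T. out_degree E v \<ge> max_in_degree V E"
  shows "\<exists>P :: 'a \<Rightarrow> 'a list.
           (\<forall>s\<in>S. dpath V E (P s) \<and> hd (P s) = s \<and> last (P s) \<in> T) \<and>
           (\<forall>s\<in>S. \<forall>s'\<in>S. s \<noteq> s' \<longrightarrow> set (P s) \<inter> set (P s') = {})"
proof -
  have fin: "finite E" "finite S" "finite T"
    using assms(1,3,6) finite_arcs finite_subset by (auto simp: digraph_def)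
  obtain P where "linkage E S T (card S) P"
    using menger[OF fin] separator_card_ge[OF assms(1,2,3,5,8)] by blast
  then obtain P' where P': "linkage E S T (card S) P'" "\<forall>p\<in>P'. AB_path S T p"
    using linkage_AB_paths by blast
  define path where "path = inv_into P' hd"
  have path: "path s \<in> P'" "hd (path s) = s" if "s \<in> S" for s
    using linkage_hd_image[OF P'(1) fin(2)] that inv_into_into f_inv_into_f unfolding path_def
    by metis+
  show ?thesis
  proof (intro exI[of _ path] conjI ballI impI)
    fix s assume s: "s \<in> S"
    have "walk E (path s)" "last (path s) \<in> T" "distinct (path s)"
      using linkage_walk[OF P'(1) path(1)[OF s]] P'(2) path(1)[OF s] by (auto simp: AB_path_def)
    then show "dpath V E (path s)" "hd (path s) = s" "last (path s) \<in> T"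
      using walk_subset_vertices[of E "path s" V] assms(1,3) path(2)[OF s] s
      by (auto simp: dpath_iff_walk digraph_def)
  next
    fix s s' assume "s \<in> S" "s' \<in> S" "s \<noteq> s'"
    then show "set (path s) \<inter> set (path s') = {}"
      using linkage_disjoint[OF P'(1)] path by metis
  qed
qed

end
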